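(* Let $S$ be a semigroup and let $\mathrm{Pr}(S)$ be its predicatization. Then every direct power $\Pi\mathrm{Pr}(S)=\prod_{i\in I}\mathrm{Pr}(S)$ is $\mathcal{L}_{s\text{-}pred}(\Pi S)$-equationally Noetherian if and only if $S$ satisfies both quasi-identities $$\forall a\,\forall b\,\forall \alpha\,\forall\beta\ \big((a\alpha=a\beta)\to(b\alpha=b\beta)\big),$$ $$\forall a\,\forall b\,\forall \alpha\,\forall\beta\ \big((\alpha a=\beta a)\to(\alpha b=\beta b)\big).$$
   Context: The language $\mathcal{L}_{s\text{-}pred}=\{M\}$ has a single ternary relation symbol. The predicatization $\mathrm{Pr}(S)$ of a semigroup $S$ is the $\mathcal{L}_{s\text{-}pred}$-structure with universe $S$ in which $M(x,y,z)$ holds iff $xy=z$. The direct power $\prod_{i\in I}\mathrm{Pr}(S)$ consists of all sequences $[a_i\mid i\in I]$ with $M$ holding coordinatewise. $\mathcal{L}_{s\text{-}pred}(\Pi S)$ is the language extended by a constant symbol for every element of the direct power. An equation is an atomic formula of this language ($M(t_1,t_2,t_3)$ or $t_1=t_2$, each $t_k$ a variable or a constant); a system is any set of equations in a fixed finite set of variables $x_1,\dots,x_n$; two systems are equivalent if they have the same set of solutions in the structure. A structure is $\mathcal{L}_{s\text{-}pred}(\Pi S)$-equationally Noetherian if every such system is equivalent over it to a finite subsystem. *)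

theory Defs
  imports "HOL-Library.FuncSet"
begin

text \<open>Terms of the language L_{s-pred}(Pi S): variables x_k (k :: nat) or constants
  (elements of the direct power, represented as extensional functions I -> S).\<close>
datatype 'c trm = Var nat | Cst 'c

datatype 'c eqn = EqM "'c trm" "'c trm" "'c trm" | EqE "'c trm" "'c trm"

fun trm_vars :: "'c trm \<Rightarrow> nat set" where
  "trm_vars (Var k) = {k}" | "trm_vars (Cst c) = {}"

fun trm_consts :: "'c trm \<Rightarrow> 'c set" where
  "trm_consts (Var k) = {}" | "trm_consts (Cst c) = {c}"

fun eqn_vars :: "'c eqn \<Rightarrow> nat set" where
  "eqn_vars (EqM t1 t2 t3) = trm_vars t1 \<union> trm_vars t2 \<union> trm_vars t3"
| "eqn_vars (EqE t1 t2) = trm_vars t1 \<union> trm_vars t2"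

fun eqn_consts :: "'c eqn \<Rightarrow> 'c set" where
  "eqn_consts (EqM t1 t2 t3) = trm_consts t1 \<union> trm_consts t2 \<union> trm_consts t3"
| "eqn_consts (EqE t1 t2) = trm_consts t1 \<union> trm_consts t2"

fun trm_eval :: "(nat \<Rightarrow> 'c) \<Rightarrow> 'c trm \<Rightarrow> 'c" where
  "trm_eval p (Var k) = p k" | "trm_eval p (Cst c) = c"

text \<open>Universe of the direct power prod_{i in I} Pr(S), where S is the whole type 'a.\<close>
definition power :: "'i set \<Rightarrow> ('i \<Rightarrow> 'a) set" where
  "power I = PiE I (\<lambda>_. UNIV)"

definition powM :: "'i set \<Rightarrow> ('i \<Rightarrow> 'a::semigroup_mult) \<Rightarrow> ('i \<Rightarrow> 'a) \<Rightarrow> ('i \<Rightarrow> 'a) \<Rightarrow> bool" where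
  "powM I x y z \<longleftrightarrow> (\<forall>i\<in>I. x i * y i = z i)"

fun eqn_holds :: "'i set \<Rightarrow> (nat \<Rightarrow> ('i \<Rightarrow> 'a::semigroup_mult)) \<Rightarrow> ('i \<Rightarrow> 'a) eqn \<Rightarrow> bool" where
  "eqn_holds I p (EqM t1 t2 t3) = powM I (trm_eval p t1) (trm_eval p t2) (trm_eval p t3)"
| "eqn_holds I p (EqE t1 t2) = (trm_eval p t1 = trm_eval p t2)"

definition Sol :: "'i set \<Rightarrow> nat \<Rightarrow> ('i \<Rightarrow> 'a::semigroup_mult) eqn set \<Rightarrow> (nat \<Rightarrow> ('i \<Rightarrow> 'a)) set" where
  "Sol I n E = {p \<in> PiE {..<n} (\<lambda>_. power I). \<forall>e\<in>E. eqn_holds I p e}"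

definition is_system :: "'i set \<Rightarrow> nat \<Rightarrow> ('i \<Rightarrow> 'a) eqn set \<Rightarrow> bool" where
  "is_system I n E \<longleftrightarrow> (\<forall>e\<in>E. eqn_vars e \<subseteq> {..<n} \<and> eqn_consts e \<subseteq> power I)"

definition power_eq_noetherian :: "'i set \<Rightarrow> 'a::semigroup_mult itself \<Rightarrow> bool" where
  "power_eq_noetherian I (_::'a itself) \<longleftrightarrow>
     (\<forall>n. \<forall>E :: ('i \<Rightarrow> 'a) eqn set. is_system I n E \<longrightarrow>
        (\<exists>E0\<subseteq>E. finite E0 \<and> Sol I n E0 = Sol I n E))"

end

theory Submission
  imports Defs
begin

text \<open>
  Call the shape of an equation what remains when every constant is replaced by a placeholder.
  The two quasi-identities say that the kernel of the left (resp. right) translation by an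
  element does not depend on the element. Under them, two equations of the same shape with one
  common solution have the same solutions, since at each coordinate the products involved can
  be transported from one solution to another. There are only finitely many shapes in
  n variables, so every system is equivalent to a subsystem containing at most two equations
  of each shape.

  Conversely, if a \<alpha> = a \<beta> but b \<alpha> \<noteq> b \<beta>, the equations
  x0 c_j = x1, where c_j is \<beta> at coordinate j and \<alpha> elsewhere, are
  independent: taking x0 equal to b at coordinate k and a elsewhere, and
  x1 = x0 \<alpha>, solves every equation except the k-th one. An infinite index set therefore
  yields infinitely many independent equations, which no finite subsystem can replace. The
  right-hand quasi-identity is handled symmetrically with the equations c_j x0 = x1.
\<close>

lemma power_UNIV: "power UNIV = UNIV"
  unfolding power_def by (simp add: PiE_UNIV_domain)

lemma Sol_antimono: "E \<subseteq> E' \<Longrightarrow> Sol I n E' \<subseteq> Sol I n E"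
  unfolding Sol_def by auto

fun trm_shape :: "'c trm \<Rightarrow> unit trm" where
  "trm_shape (Var k) = Var k"
| "trm_shape (Cst c) = Cst ()"

fun eqn_shape :: "'c eqn \<Rightarrow> unit eqn" where
  "eqn_shape (EqM t1 t2 t3) = EqM (trm_shape t1) (trm_shape t2) (trm_shape t3)"
| "eqn_shape (EqE t1 t2) = EqE (trm_shape t1) (trm_shape t2)"

lemma eqn_vars_eqn_shape: "eqn_vars (eqn_shape e) = eqn_vars e"
proof -
  have "trm_vars (trm_shape t) = trm_vars t" for t :: "'c trm"
    by (cases t) auto
  then show ?thesis
    by (cases e) auto
qed

lemma finite_eqn_shapes: "finite {e :: unit eqn. eqn_vars e \<subseteq> {..<n}}"
proof -
  define T where "T = insert (Cst ()) (Var ` {..<n})"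
  have T: "t \<in> T" if "trm_vars t \<subseteq> {..<n}" for t :: "unit trm"
    using that unfolding T_def by (cases t) auto
  have "{e :: unit eqn. eqn_vars e \<subseteq> {..<n}} \<subseteq>
      (\<lambda>(t1, t2, t3). EqM t1 t2 t3) ` (T \<times> T \<times> T) \<union> (\<lambda>(t1, t2). EqE t1 t2) ` (T \<times> T)"
  proof
    fix e :: "unit eqn"
    assume "e \<in> {e. eqn_vars e \<subseteq> {..<n}}"
    then show "e \<in> (\<lambda>(t1, t2, t3). EqM t1 t2 t3) ` (T \<times> T \<times> T) \<union> (\<lambda>(t1, t2). EqE t1 t2) ` (T \<times> T)"
    proof (cases e)
      case (EqM t1 t2 t3)
      with \<open>e \<in> _\<close> show ?thesis
        by (auto intro!: T image_eqI[of _ _ "(t1, t2, t3)"])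
    next
      case (EqE t1 t2)
      with \<open>e \<in> _\<close> show ?thesis
        by (auto intro!: T image_eqI[of _ _ "(t1, t2)"])
    qed
  qed
  moreover have "finite T"
    unfolding T_def by simp
  ultimately show ?thesis
    by (auto intro: finite_subset)
qed

lemma trm_shape_eq_eval:
  assumes "trm_shape s = trm_shape t"
  shows "(trm_eval q s i, trm_eval q t i) = (trm_eval r s i, trm_eval r t i) \<or>
         (trm_eval r s i = trm_eval r t i \<and> trm_eval q s i = trm_eval q t i)"
  using assms by (cases s; cases t) auto

text \<open>
  Read the letters as the values, at one coordinate, of two equations of the same shape
  (unprimed and primed) at two points (x, y, z and u, v, w). A position holding constants has
  the same values at both points; a position holding a shared variable has equal unprimed and
  primed values.
\<close>

lemma mult_eq_transfer:
  fixes x y z x' y' z' u v w u' v' w' :: "'a::semigroup_mult"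
  assumes left: "\<forall>a b \<alpha> \<beta> :: 'a. a * \<alpha> = a * \<beta> \<longrightarrow> b * \<alpha> = b * \<beta>"
    and right: "\<forall>a b \<alpha> \<beta> :: 'a. \<alpha> * a = \<beta> * a \<longrightarrow> \<alpha> * b = \<beta> * b"
    and "x * y = z" "x' * y' = z'" "u * v = w"
    and "(u, u') = (x, x') \<or> (x = x' \<and> u = u')"
    and "(v, v') = (y, y') \<or> (y = y' \<and> v = v')"
    and "(w, w') = (z, z') \<or> (z = z' \<and> w = w')"
  shows "u' * v' = w'"
  using assms(3-) by (elim disjE conjE; simp) (metis left right)+

lemma eqn_holds_transfer:
  assumes left: "\<forall>a b \<alpha> \<beta> :: 'a::semigroup_mult. a * \<alpha> = a * \<beta> \<longrightarrow> b * \<alpha> = b * \<beta>"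
    and right: "\<forall>a b \<alpha> \<beta> :: 'a. \<alpha> * a = \<beta> * a \<longrightarrow> \<alpha> * b = \<beta> * b"
    and shape: "eqn_shape f = eqn_shape g"
    and r_f: "eqn_holds I r f" and r_g: "eqn_holds I r g" and q_f: "eqn_holds I q f"
  shows "eqn_holds I q (g :: ('i \<Rightarrow> 'a) eqn)"
proof (cases f)
  case (EqM s1 s2 s3)
  with shape obtain t1 t2 t3 where g: "g = EqM t1 t2 t3" and
    "trm_shape s1 = trm_shape t1" "trm_shape s2 = trm_shape t2" "trm_shape s3 = trm_shape t3"
    by (cases g) auto
  note pairs = this(2-4)[THEN trm_shape_eq_eval[where q = q and r = r]]
  show ?thesis
    unfolding g eqn_holds.simps powM_def
  proof
    fix i
    assume "i \<in> I"
    with r_f r_g q_f have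
      "trm_eval r s1 i * trm_eval r s2 i = trm_eval r s3 i"
      "trm_eval r t1 i * trm_eval r t2 i = trm_eval r t3 i"
      "trm_eval q s1 i * trm_eval q s2 i = trm_eval q s3 i"
      by (simp_all add: EqM g powM_def)
    then show "trm_eval q t1 i * trm_eval q t2 i = trm_eval q t3 i"
      by (rule mult_eq_transfer[OF left right _ _ _ pairs])
  qed
next
  case (EqE s1 s2)
  with shape obtain t1 t2 where g: "g = EqE t1 t2" and
    "trm_shape s1 = trm_shape t1" "trm_shape s2 = trm_shape t2"
    by (cases g) auto
  note pairs = this(2,3)[THEN trm_shape_eq_eval[where q = q and r = r]]
  show ?thesis
    unfolding g eqn_holds.simps
  proof
    fix i
    from r_f r_g q_f have
      "trm_eval r s1 i = trm_eval r s2 i" "trm_eval r t1 i = trm_eval r t2 i"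
      "trm_eval q s1 i = trm_eval q s2 i"
      by (simp_all add: EqE g)
    with pairs[of i] show "trm_eval q t1 i = trm_eval q t2 i"
      by auto
  qed
qed

lemma finite_subsystem_same_shape:
  assumes left: "\<forall>a b \<alpha> \<beta> :: 'a::semigroup_mult. a * \<alpha> = a * \<beta> \<longrightarrow> b * \<alpha> = b * \<beta>"
    and right: "\<forall>a b \<alpha> \<beta> :: 'a. \<alpha> * a = \<beta> * a \<longrightarrow> \<alpha> * b = \<beta> * b"
    and shape: "\<And>e. e \<in> C \<Longrightarrow> eqn_shape e = \<sigma>"
  shows "\<exists>F \<subseteq> C. finite F \<and> Sol I n F = Sol I n (C :: ('i \<Rightarrow> 'a) eqn set)"
proof (cases "\<exists>f \<in> C. \<exists>g \<in> C. Sol I n {f, g} = {}")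
  case True
  then obtain f g where "f \<in> C" "g \<in> C" "Sol I n {f, g} = {}"
    by blast
  with Sol_antimono[of "{f, g}" C] show ?thesis
    by (intro exI[of _ "{f, g}"]) auto
next
  case False
  show ?thesis
  proof (cases "C = {}")
    case False
    then obtain f where f: "f \<in> C"
      by blast
    have "Sol I n {f} \<subseteq> Sol I n C"
    proof
      fix q
      assume q: "q \<in> Sol I n {f}"
      have "eqn_holds I q g" if g: "g \<in> C" for g
      proof -
        from \<open>\<not> (\<exists>f \<in> C. \<exists>g \<in> C. Sol I n {f, g} = {})\<close> f g
        obtain r where "r \<in> Sol I n {f, g}"
          by blast
        with q shape[OF f] shape[OF g] show ?thesis
          unfolding Sol_def by (auto intro: eqn_holds_transfer[OF left right, of f g])
      qed
      with q show "q \<in> Sol I n C"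
        unfolding Sol_def by blast
    qed
    with f Sol_antimono[of "{f}" C] show ?thesis
      by (intro exI[of _ "{f}"]) auto
  qed auto
qed

lemma finite_subsystem_from_fibres:
  assumes "finite (h ` E)"
    and fibre: "\<And>\<sigma>. \<exists>F \<subseteq> {e \<in> E. h e = \<sigma>}. finite F \<and> Sol I n F = Sol I n {e \<in> E. h e = \<sigma>}"
  shows "\<exists>E0 \<subseteq> E. finite E0 \<and> Sol I n E0 = Sol I n E"
proof -
  from fibre have "\<forall>\<sigma>. \<exists>F. F \<subseteq> {e \<in> E. h e = \<sigma>} \<and> finite F \<and> Sol I n F = Sol I n {e \<in> E. h e = \<sigma>}"
    by blast
  then obtain F where F: "\<forall>\<sigma>. F \<sigma> \<subseteq> {e \<in> E. h e = \<sigma>} \<and> finite (F \<sigma>) \<and>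
      Sol I n (F \<sigma>) = Sol I n {e \<in> E. h e = \<sigma>}"
    by (rule choice[THEN exE])
  then have F_sub: "\<And>\<sigma>. F \<sigma> \<subseteq> {e \<in> E. h e = \<sigma>}"
    and F_finite: "\<And>\<sigma>. finite (F \<sigma>)"
    and F_Sol: "\<And>\<sigma>. Sol I n (F \<sigma>) = Sol I n {e \<in> E. h e = \<sigma>}"
    by blast+
  define E0 where "E0 = (\<Union>\<sigma> \<in> h ` E. F \<sigma>)"
  have "E0 \<subseteq> E"
    using F_sub unfolding E0_def by blast
  moreover have "finite E0"
    unfolding E0_def using assms(1) F_finite by blast
  moreover have "Sol I n E0 \<subseteq> Sol I n E"
  proof
    fix p
    assume p: "p \<in> Sol I n E0"
    have "p \<in> Sol I n {e' \<in> E. h e' = h e}" if "e \<in> E" for e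
    proof -
      from that have "F (h e) \<subseteq> E0"
        unfolding E0_def by blast
      with p have "p \<in> Sol I n (F (h e))"
        using Sol_antimono by blast
      then show ?thesis
        by (simp add: F_Sol)
    qed
    with p show "p \<in> Sol I n E"
      unfolding Sol_def by blast
  qed
  ultimately show ?thesis
    using Sol_antimono[of E0 E] by blast
qed

lemma power_eq_noetherianI:
  assumes left: "\<forall>a b \<alpha> \<beta> :: 'a::semigroup_mult. a * \<alpha> = a * \<beta> \<longrightarrow> b * \<alpha> = b * \<beta>"
    and right: "\<forall>a b \<alpha> \<beta> :: 'a. \<alpha> * a = \<beta> * a \<longrightarrow> \<alpha> * b = \<beta> * b"
  shows "power_eq_noetherian (I :: 'i set) TYPE('a)"
  unfolding power_eq_noetherian_def
proof (intro allI impI)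
  fix n and E :: "('i \<Rightarrow> 'a) eqn set"
  assume "is_system I n E"
  then have "eqn_shape ` E \<subseteq> {e. eqn_vars e \<subseteq> {..<n}}"
    unfolding is_system_def by (fastforce simp: eqn_vars_eqn_shape)
  then have "finite (eqn_shape ` E)"
    using finite_eqn_shapes finite_subset by blast
  moreover have "\<exists>F \<subseteq> {e \<in> E. eqn_shape e = \<sigma>}. finite F \<and> Sol I n F = Sol I n {e \<in> E. eqn_shape e = \<sigma>}"
    for \<sigma>
    by (rule finite_subsystem_same_shape[OF left right, where \<sigma> = \<sigma>]) blast
  ultimately show "\<exists>E0 \<subseteq> E. finite E0 \<and> Sol I n E0 = Sol I n E"
    by (rule finite_subsystem_from_fibres)
qed

lemma mem_equivalent_subsystemI:
  assumes "E0 \<subseteq> E" "Sol I n E0 = Sol I n E" "e \<in> E"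
    and "p \<in> PiE {..<n} (\<lambda>_. power I)" "\<forall>f \<in> E - {e}. eqn_holds I p f" "\<not> eqn_holds I p e"
  shows "e \<in> E0"
  using assms unfolding Sol_def by blast

text \<open>
  The operation \<open>op\<close> is left multiplication or the flipped right multiplication, and
  \<open>eq_op c\<close> the equation x0 \<open>op\<close> c = x1 in the corresponding form.
\<close>

lemma not_power_eq_noetherian_UNIV:
  fixes op :: "'a::semigroup_mult \<Rightarrow> 'a \<Rightarrow> 'a" and eq_op :: "('i \<Rightarrow> 'a) \<Rightarrow> ('i \<Rightarrow> 'a) eqn"
  assumes "infinite (UNIV :: 'i set)"
    and eq_op_vars: "\<And>c. eqn_vars (eq_op c) \<subseteq> {0, 1}"
    and eq_op_holds: "\<And>p c. eqn_holds UNIV p (eq_op c) \<longleftrightarrow> (\<forall>i. op (p 0 i) (c i) = p 1 i)"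
    and "op a \<alpha> = op a \<beta>" "op b \<alpha> \<noteq> op b \<beta>"
  shows "\<not> power_eq_noetherian (UNIV :: 'i set) TYPE('a)"
proof
  define e where "e j = eq_op (\<lambda>i. if i = j then \<beta> else \<alpha>)" for j :: 'i
  define p where "p k = (\<lambda>m :: nat. if m = 0 then (\<lambda>i. if i = k then b else a)
    else if m = 1 then (\<lambda>i. op (if i = k then b else a) \<alpha>) else undefined)" for k :: 'i
  have p_holds: "eqn_holds UNIV (p k) (e j) \<longleftrightarrow> j \<noteq> k" for j k
    using assms(4,5) unfolding e_def p_def eq_op_holds by auto
  have p_PiE: "p k \<in> PiE {..<2} (\<lambda>_. power UNIV)" for k
    unfolding p_def power_UNIV by auto
  assume "power_eq_noetherian (UNIV :: 'i set) TYPE('a)"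
  moreover have "is_system UNIV 2 (range e)"
    using eq_op_vars unfolding is_system_def power_UNIV e_def by fastforce
  ultimately obtain E0 where E0: "E0 \<subseteq> range e" "finite E0" "Sol UNIV 2 E0 = Sol UNIV 2 (range e)"
    unfolding power_eq_noetherian_def by blast
  have "e k \<in> E0" for k
    using p_holds by (intro mem_equivalent_subsystemI[OF E0(1,3) _ p_PiE[of k]]) auto
  with E0(2) have "finite (range e)"
    by (meson finite_subset image_subsetI)
  moreover have "inj e"
    by (rule injI) (metis p_holds)
  ultimately show False
    using assms(1) finite_imageD by blast
qed

lemma left_quasi_identity_if_power_eq_noetherian:
  assumes "infinite (UNIV :: 'i set)" "power_eq_noetherian (UNIV :: 'i set) TYPE('a::semigroup_mult)"
  shows "\<forall>a b \<alpha> \<beta> :: 'a. a * \<alpha> = a * \<beta> \<longrightarrow> b * \<alpha> = b * \<beta>"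
  using not_power_eq_noetherian_UNIV[where eq_op = "\<lambda>c. EqM (Var 0) (Cst c) (Var 1)" and op = "(*)"]
    assms by (fastforce simp: powM_def)

lemma right_quasi_identity_if_power_eq_noetherian:
  assumes "infinite (UNIV :: 'i set)" "power_eq_noetherian (UNIV :: 'i set) TYPE('a::semigroup_mult)"
  shows "\<forall>a b \<alpha> \<beta> :: 'a. \<alpha> * a = \<beta> * a \<longrightarrow> \<alpha> * b = \<beta> * b"
  using not_power_eq_noetherian_UNIV[where eq_op = "\<lambda>c. EqM (Cst c) (Var 0) (Var 1)"
      and op = "\<lambda>x c. c * x"]
    assms by (fastforce simp: powM_def)

theorem theorem1:
  assumes "infinite (UNIV :: 'i set)"
  shows "(\<forall>I :: 'i set. power_eq_noetherian I TYPE('a::semigroup_mult)) \<longleftrightarrow>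
         ((\<forall>a b \<alpha> \<beta> :: 'a. a * \<alpha> = a * \<beta> \<longrightarrow> b * \<alpha> = b * \<beta>) \<and>
          (\<forall>a b \<alpha> \<beta> :: 'a. \<alpha> * a = \<beta> * a \<longrightarrow> \<alpha> * b = \<beta> * b))"
proof
  assume "\<forall>I :: 'i set. power_eq_noetherian I TYPE('a)"
  then have "power_eq_noetherian (UNIV :: 'i set) TYPE('a)" ..
  then show "(\<forall>a b \<alpha> \<beta> :: 'a. a * \<alpha> = a * \<beta> \<longrightarrow> b * \<alpha> = b * \<beta>) \<and>
      (\<forall>a b \<alpha> \<beta> :: 'a. \<alpha> * a = \<beta> * a \<longrightarrow> \<alpha> * b = \<beta> * b)"
    using left_quasi_identity_if_power_eq_noetherian[OF assms]
      right_quasi_identity_if_power_eq_noetherian[OF assms] by blast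
next
  assume "(\<forall>a b \<alpha> \<beta> :: 'a. a * \<alpha> = a * \<beta> \<longrightarrow> b * \<alpha> = b * \<beta>) \<and>
      (\<forall>a b \<alpha> \<beta> :: 'a. \<alpha> * a = \<beta> * a \<longrightarrow> \<alpha> * b = \<beta> * b)"
  then show "\<forall>I :: 'i set. power_eq_noetherian I TYPE('a)"
    using power_eq_noetherianI by blast
qed

end
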